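(* Consider the following instance of the setup. $\mathcal A=\{0,1\}$ with $A$ uniform; $B$ is the output of a binary erasure channel with erasure probability $\beta\in[0,1]$ and input $A$ (so $\mathcal B=\{0,1,\mathrm{e}\}$, $B=A$ with probability $1-\beta$ and $B=\mathrm{e}$ with probability $\beta$); $E$ is the output of a binary symmetric channel with crossover probability $\epsilon\in[0,1/2]$ and input $A$, where $B$ and $E$ are conditionally independent given $A$. The channel has $\mathcal X=\mathcal Y=\mathcal Z=\{0,1\}$, $Y=X$ (noiseless), and $Z$ is the output of a binary symmetric channel with crossover probability $\zeta\in[0,1/2]$ and input $X$. The distortion is Hamming, $d(a,\hat a)=\mathbf 1\{a\ne\hat a\}$. Let $\mathcal R_{\mathrm{in}}$ be the set of tuples $(k,D,\Delta)\in\mathbb{R}_+^3$ satisfying the conditions of the inner bound below. Then for every $\Delta\ge0$: $(1,0,\Delta)\in\mathcal R_{\mathrm{in}}$ if and only if there exist $u,q\in[0,1/2]$ such that \begin{align*} \beta\,(1-h_2(u))&\le 1-h_2(q),\\ \Delta&\le h_2(\epsilon)+h_2(u)-h_2(\epsilon\star u)-\Big[\beta\,h_2(u)-\big(h_2(\zeta)+h_2(q)-h_2(\zeta\star q)\big)\Big]_+ . \end{align*}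
   Context: Here $h_2(x)=-x\log_2 x-(1-x)\log_2(1-x)$ is the binary entropy function, $a\star b=a(1-b)+(1-a)b$, and $[x]_+=\max(0,x)$. Inner bound region $\mathcal R_{\mathrm{in}}$: a tuple $(k,D,\Delta)\in\mathbb{R}_+^3$ belongs to $\mathcal R_{\mathrm{in}}$ iff there exist random variables $U,V,Q,T$ on finite sets, an input distribution $p(x)$, and a function $\hat A:\mathcal V\times\mathcal B\to\mathcal A$ with joint distribution $p(u|v)\,p(v|a)\,p(a,b,e)\,p(q|t)\,p(t|x)\,p(x)\,P(y,z|x)$ such that $I(U;A|B)\le k\,I(Q;Y)$, $I(V;A|B)\le k\,I(T;Y)$, $D\ge\mathbb{E}[d(A,\hat A(V,B))]$, and $\Delta\le H(A|U,E)-\big[I(V;A|U,B)-k\big(I(T;Y|Q)-I(T;Z|Q)\big)\big]_+$. Here $(A,B,E)$ has the source distribution and $(Y,Z)$ is the channel output for input $X$. *)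

theory Defs
  imports "HOL-Probability.Probability"
begin

definition h2 :: "real \<Rightarrow> real" where
  "h2 x = - x * log 2 x - (1 - x) * log 2 (1 - x)"
  (* note: in Isabelle log 2 0 = 0, so 0 * log 2 0 = 0 as in the convention 0 log 0 = 0 *)

definition star :: "real \<Rightarrow> real \<Rightarrow> real" where
  "star a b = a * (1 - b) + (1 - a) * b"

definition pos_part :: "real \<Rightarrow> real" where
  "pos_part x = max 0 x"

definition ent :: "'a pmf \<Rightarrow> real" where
  "ent p = (\<Sum>x\<in>set_pmf p. - pmf p x * log 2 (pmf p x))"

definition Hv :: "'w pmf \<Rightarrow> ('w \<Rightarrow> 'a) \<Rightarrow> real" where
  "Hv J X = ent (map_pmf X J)"

definition MI :: "'w pmf \<Rightarrow> ('w \<Rightarrow> 'a) \<Rightarrow> ('w \<Rightarrow> 'b) \<Rightarrow> real" where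
  "MI J X Y = Hv J X + Hv J Y - Hv J (\<lambda>w. (X w, Y w))"

definition CMI :: "'w pmf \<Rightarrow> ('w \<Rightarrow> 'a) \<Rightarrow> ('w \<Rightarrow> 'b) \<Rightarrow> ('w \<Rightarrow> 'c) \<Rightarrow> real" where
  "CMI J X Y Z = Hv J (\<lambda>w. (X w, Z w)) + Hv J (\<lambda>w. (Y w, Z w))
                 - Hv J (\<lambda>w. (X w, Y w, Z w)) - Hv J Z"

definition CH :: "'w pmf \<Rightarrow> ('w \<Rightarrow> 'a) \<Rightarrow> ('w \<Rightarrow> 'b) \<Rightarrow> real" where
  "CH J X Y = Hv J (\<lambda>w. (X w, Y w)) - Hv J Y"

text \<open>Binary symmetric channel with crossover probability p, and binary erasure
  channel with erasure probability p (None = erasure symbol e).\<close>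
definition bsc :: "real \<Rightarrow> bool \<Rightarrow> bool pmf" where
  "bsc p a = map_pmf (\<lambda>flip. if flip then \<not> a else a) (bernoulli_pmf p)"

definition bec :: "real \<Rightarrow> bool \<Rightarrow> bool option pmf" where
  "bec p a = map_pmf (\<lambda>er. if er then None else Some a) (bernoulli_pmf p)"

text \<open>Source outcomes (U, V, A, B, E); auxiliary alphabets encoded in nat.\<close>
type_synonym src_outcome = "nat \<times> nat \<times> bool \<times> bool option \<times> bool"

definition src_joint :: "real \<Rightarrow> real \<Rightarrow> (bool \<Rightarrow> nat pmf) \<Rightarrow> (nat \<Rightarrow> nat pmf)
    \<Rightarrow> src_outcome pmf" where
  "src_joint \<beta> \<epsilon> pV pU =
     do { a \<leftarrow> bernoulli_pmf (1/2); b \<leftarrow> bec \<beta> a; e \<leftarrow> bsc \<epsilon> a;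
          v \<leftarrow> pV a; u \<leftarrow> pU v; return_pmf (u, v, a, b, e) }"

definition sU :: "src_outcome \<Rightarrow> nat" where "sU w = (case w of (u,v,a,b,e) \<Rightarrow> u)"
definition sV :: "src_outcome \<Rightarrow> nat" where "sV w = (case w of (u,v,a,b,e) \<Rightarrow> v)"
definition sA :: "src_outcome \<Rightarrow> bool" where "sA w = (case w of (u,v,a,b,e) \<Rightarrow> a)"
definition sB :: "src_outcome \<Rightarrow> bool option" where "sB w = (case w of (u,v,a,b,e) \<Rightarrow> b)"
definition sE :: "src_outcome \<Rightarrow> bool" where "sE w = (case w of (u,v,a,b,e) \<Rightarrow> e)"

text \<open>Channel outcomes (Q, T, X, Y, Z), with Y = X and Z = BSC(zeta) of X.\<close>
type_synonym chan_outcome = "nat \<times> nat \<times> bool \<times> bool \<times> bool"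

definition chan_joint :: "real \<Rightarrow> bool pmf \<Rightarrow> (bool \<Rightarrow> nat pmf) \<Rightarrow> (nat \<Rightarrow> nat pmf)
    \<Rightarrow> chan_outcome pmf" where
  "chan_joint \<zeta> pX pT pQ =
     do { x \<leftarrow> pX; t \<leftarrow> pT x; q \<leftarrow> pQ t; z \<leftarrow> bsc \<zeta> x;
          return_pmf (q, t, x, x, z) }"

definition cQ :: "chan_outcome \<Rightarrow> nat" where "cQ w = (case w of (q,t,x,y,z) \<Rightarrow> q)"
definition cT :: "chan_outcome \<Rightarrow> nat" where "cT w = (case w of (q,t,x,y,z) \<Rightarrow> t)"
definition cY :: "chan_outcome \<Rightarrow> bool" where "cY w = (case w of (q,t,x,y,z) \<Rightarrow> y)"
definition cZ :: "chan_outcome \<Rightarrow> bool" where "cZ w = (case w of (q,t,x,y,z) \<Rightarrow> z)"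

definition R_in :: "real \<Rightarrow> real \<Rightarrow> real \<Rightarrow> (real \<times> real \<times> real) set" where
  "R_in \<beta> \<epsilon> \<zeta> = {(k, D, \<Delta>). k \<ge> 0 \<and> D \<ge> 0 \<and> \<Delta> \<ge> 0 \<and>
     (\<exists>(UU::nat set) (VV::nat set) (QQ::nat set) (TT::nat set)
        (pU::nat \<Rightarrow> nat pmf) (pV::bool \<Rightarrow> nat pmf) (pQ::nat \<Rightarrow> nat pmf)
        (pT::bool \<Rightarrow> nat pmf) (pX::bool pmf) (Ahat::nat \<Rightarrow> bool option \<Rightarrow> bool).
        finite UU \<and> finite VV \<and> finite QQ \<and> finite TT \<and>
        (\<forall>v. set_pmf (pU v) \<subseteq> UU) \<and> (\<forall>a. set_pmf (pV a) \<subseteq> VV) \<and>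
        (\<forall>t. set_pmf (pQ t) \<subseteq> QQ) \<and> (\<forall>x. set_pmf (pT x) \<subseteq> TT) \<and>
        (let S = src_joint \<beta> \<epsilon> pV pU; C = chan_joint \<zeta> pX pT pQ in
          CMI S sU sA sB \<le> k * MI C cQ cY \<and>
          CMI S sV sA sB \<le> k * MI C cT cY \<and>
          D \<ge> measure_pmf.expectation S (\<lambda>w. if sA w \<noteq> Ahat (sV w) (sB w) then 1 else 0) \<and>
          \<Delta> \<le> CH S sA (\<lambda>w. (sU w, sE w))
               - pos_part (CMI S sV sA (\<lambda>w. (sU w, sB w))
                           - k * (CMI C cT cY cQ - CMI C cT cZ cQ))))}"

end

theory Submission
  imports Defs "HOL-Real_Asymp.Real_Asymp"
begin

text \<open>For the converse write \<open>H(A|U) = h2 u\<close> and \<open>H(X|Q) = h2 q\<close>. The rate constraint becomes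
  \<open>\<beta> (1 - h2 u) \<le> I(Q;Y) \<le> 1 - h2 q\<close>; zero distortion makes \<open>A\<close> a function of \<open>(V, B)\<close>, so that
  \<open>I(V;A|U,B) = \<beta> h2 u\<close>; and Mrs.\ Gerber's lemma, applied to \<open>A\<close> seen through the binary
  symmetric channel to \<open>E\<close> and to \<open>X\<close> seen through the one to \<open>Z\<close>, gives
  \<open>H(A|U,E) \<le> h2 \<epsilon> + h2 u - h2 (\<epsilon> \<star> u)\<close> and
  \<open>I(T;Y|Q) - I(T;Z|Q) \<le> h2 \<zeta> + h2 q - h2 (\<zeta> \<star> q)\<close>. Conversely, with \<open>V = A\<close>, \<open>U\<close> equal to \<open>A\<close>
  flipped with probability \<open>u\<close>, \<open>X\<close> uniform, \<open>T = X\<close> and \<open>Q\<close> equal to \<open>X\<close> flipped with probability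
  \<open>q\<close>, all these bounds are attained.\<close>

section \<open>Entropy of finite distributions\<close>

text \<open>\<open>h2w a b = (a + b) * h2 (a / (a + b))\<close>, written without the division: the contribution
  to \<open>H(X|Y)\<close> of a value of \<open>Y\<close> at which the binary \<open>X\<close> has masses \<open>a\<close> and \<open>b\<close>.\<close>
definition h2w :: "real \<Rightarrow> real \<Rightarrow> real" where
  "h2w a b = - a * log 2 a - b * log 2 b + (a + b) * log 2 (a + b)"

lemma ent_eq_sum_superset:
  assumes "finite A" "set_pmf p \<subseteq> A"
  shows "ent p = (\<Sum>x\<in>A. - pmf p x * log 2 (pmf p x))"
  unfolding ent_def
  by (rule sum.mono_neutral_left) (use assms in \<open>auto simp: set_pmf_iff\<close>)

lemma ent_map_pmf_inj:
  assumes "inj_on g (set_pmf M)"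
  shows "ent (map_pmf g M) = ent M"
  unfolding ent_def using assms
  by (simp add: sum.reindex pmf_map_inj)

lemma Hv_comp_inj:
  assumes "inj g"
  shows "Hv J (\<lambda>w. g (X w)) = Hv J X"
proof -
  have "map_pmf (\<lambda>w. g (X w)) J = map_pmf g (map_pmf X J)"
    by (simp add: pmf.map_comp o_def)
  thus ?thesis unfolding Hv_def using assms
    by (simp add: ent_map_pmf_inj inj_on_subset)
qed

lemma pmf_True_plus_pmf_False: "pmf p True + pmf p False = 1"
proof -
  have "(\<Sum>x\<in>UNIV. pmf p x) = 1" by (rule sum_pmf_eq_1) auto
  thus ?thesis by (simp add: UNIV_bool add.commute)
qed

lemma ent_bool: "ent (p :: bool pmf) = h2w (pmf p True) (pmf p False)"
proof -
  have "ent p = (\<Sum>x\<in>UNIV. - pmf p x * log 2 (pmf p x))"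
    by (rule ent_eq_sum_superset) auto
  thus ?thesis by (simp add: UNIV_bool h2w_def pmf_True_plus_pmf_False)
qed

lemma ent_minus_ent_snd_bool:
  fixes M :: "(bool \<times> 'b) pmf"
  assumes "finite Y" "snd ` set_pmf M \<subseteq> Y"
  shows "ent M - ent (map_pmf snd M) = (\<Sum>y\<in>Y. h2w (pmf M (True, y)) (pmf M (False, y)))"
proof -
  have "ent M = (\<Sum>x\<in>UNIV \<times> Y. - pmf M x * log 2 (pmf M x))"
    by (rule ent_eq_sum_superset) (use assms in force)+
  also have "\<dots> = (\<Sum>y\<in>Y. - pmf M (True, y) * log 2 (pmf M (True, y))
                            - pmf M (False, y) * log 2 (pmf M (False, y)))"
    by (simp add: sum.cartesian_product' UNIV_bool sum_subtractf sum_negf)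
  finally have ent_M: "ent M = \<dots>" .
  have pmf_snd: "pmf (map_pmf snd M) y = pmf M (True, y) + pmf M (False, y)" for y
  proof -
    have "snd -` {y} = {(True, y), (False, y)}" by auto
    thus ?thesis by (simp add: pmf_map measure_measure_pmf_finite)
  qed
  have "ent (map_pmf snd M)
      = (\<Sum>y\<in>Y. - pmf (map_pmf snd M) y * log 2 (pmf (map_pmf snd M) y))"
    by (rule ent_eq_sum_superset) (use assms in auto)
  thus ?thesis unfolding ent_M pmf_snd h2w_def
    by (simp add: sum_subtractf[symmetric] algebra_simps)
qed

lemma Hv_pair_swap: "Hv J (\<lambda>w. (Y w, X w)) = Hv J (\<lambda>w. (X w, Y w))"
  using Hv_comp_inj[of "\<lambda>(a, b). (b, a)" J "\<lambda>w. (X w, Y w)"] by (simp add: inj_def)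

lemma Hv_triple_swap: "Hv J (\<lambda>w. (Y w, (X w, Z w))) = Hv J (\<lambda>w. (X w, Y w, Z w))"
  using Hv_comp_inj[of "\<lambda>(a, b, c). (b, (a, c))" J "\<lambda>w. (X w, Y w, Z w)"] by (simp add: inj_def)

lemma CMI_eq_CH_diff: "CMI J X Y Z = CH J Y Z - CH J Y (\<lambda>w. (X w, Z w))"
  unfolding CMI_def CH_def Hv_triple_swap[of J X Y Z] by simp

lemma MI_eq_Hv_minus_CH: "MI J X Y = Hv J Y - CH J Y X"
  unfolding MI_def CH_def Hv_pair_swap[of J Y X] by simp

lemma CH_eq_0_if_determined:
  assumes "\<And>w. w \<in> set_pmf J \<Longrightarrow> X w = f (Y w)"
  shows "CH J X Y = 0"
proof -
  have "map_pmf (\<lambda>w. (X w, Y w)) J = map_pmf (\<lambda>y. (f y, y)) (map_pmf Y J)"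
    unfolding pmf.map_comp o_def using assms by (intro map_pmf_cong) auto
  moreover have "ent (map_pmf (\<lambda>y. (f y, y)) (map_pmf Y J)) = ent (map_pmf Y J)"
    by (rule ent_map_pmf_inj) (auto simp: inj_on_def)
  ultimately show ?thesis unfolding CH_def Hv_def by simp
qed

lemma CH_bool_eq_sum_h2w:
  fixes X :: "'w \<Rightarrow> bool"
  assumes "finite YY" "\<And>w. w \<in> set_pmf J \<Longrightarrow> Y w \<in> YY"
    and "\<And>x y. pmf (map_pmf (\<lambda>w. (X w, Y w)) J) (x, y) = P x y"
  shows "CH J X Y = (\<Sum>y\<in>YY. h2w (P True y) (P False y))"
proof -
  let ?M = "map_pmf (\<lambda>w. (X w, Y w)) J"
  have "map_pmf snd ?M = map_pmf Y J" by (simp add: pmf.map_comp o_def)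
  hence "CH J X Y = ent ?M - ent (map_pmf snd ?M)" unfolding CH_def Hv_def by simp
  also have "\<dots> = (\<Sum>y\<in>YY. h2w (pmf ?M (True, y)) (pmf ?M (False, y)))"
    by (rule ent_minus_ent_snd_bool) (use assms in auto)
  finally show ?thesis unfolding assms(3) .
qed

lemma not_if_expectation_indicator_le_0:
  assumes "measure_pmf.expectation J (\<lambda>w. if P w then 1 else 0 :: real) \<le> 0" "w \<in> set_pmf J"
  shows "\<not> P w"
proof -
  let ?f = "\<lambda>w. if P w then 1 else 0 :: real"
  have int: "integrable (measure_pmf J) ?f"
    by (rule measure_pmf.integrable_const_bound[where B=1]) auto
  have "measure_pmf.expectation J ?f = 0"
    using assms(1) integral_nonneg_AE[of ?f "measure_pmf J"] by fastforce
  hence "AE w in measure_pmf J. ?f w = 0"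
    using integral_nonneg_eq_0_iff_AE[OF int] by auto
  thus ?thesis using assms(2) by (auto simp: AE_measure_pmf_iff split: if_splits)
qed

section \<open>The binary entropy function\<close>

definition hnat :: "real \<Rightarrow> real" where
  "hnat p = - p * ln p - (1 - p) * ln (1 - p)"

definition ln_odds :: "real \<Rightarrow> real" where
  "ln_odds p = ln (1 - p) - ln p"

lemma h2_eq_hnat_div_ln2: "h2 p = hnat p / ln 2"
  by (simp add: h2_def hnat_def log_def field_simps)

lemma hnat_one_minus: "hnat (1 - p) = hnat p"
  by (simp add: hnat_def algebra_simps)

lemma has_real_derivative_hnat: "0 < p \<Longrightarrow> p < 1 \<Longrightarrow> (hnat has_real_derivative ln_odds p) (at p)"
  unfolding hnat_def ln_odds_def
  by (rule derivative_eq_intros refl | simp)+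

lemma continuous_on_hnat: "continuous_on {0..1} hnat"
proof (rule continuous_on_IccI)
  show "(hnat \<longlongrightarrow> hnat 0) (at_right 0)" unfolding hnat_def by simp real_asymp
  show "(hnat \<longlongrightarrow> hnat 1) (at_left 1)" unfolding hnat_def by simp real_asymp
  show "hnat \<midarrow>x\<rightarrow> hnat x" if "0 < x" "x < 1" for x
    using has_real_derivative_hnat[OF that] DERIV_isCont isCont_def by blast
qed simp

lemma ln_odds_pos: "0 < p \<Longrightarrow> p < 1/2 \<Longrightarrow> ln_odds p > 0"
  unfolding ln_odds_def by simp

lemma ln_odds_half: "ln_odds (1/2) = 0"
  unfolding ln_odds_def by simp

lemma has_real_derivative_ln_odds:
  "0 < p \<Longrightarrow> p < 1 \<Longrightarrow> (ln_odds has_real_derivative - 1 / (p * (1 - p))) (at p)"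
  unfolding ln_odds_def
  by (rule derivative_eq_intros refl | simp)+ (simp add: field_simps)

lemma has_real_derivative_ln_odds_comp:
  assumes "(g has_real_derivative g') (at x)" "0 < g x" "g x < 1" "D = - g' / (g x * (1 - g x))"
  shows "((\<lambda>x. ln_odds (g x)) has_real_derivative D) (at x)"
  using DERIV_chain2[OF has_real_derivative_ln_odds[OF assms(2,3)] assms(1)] assms(4) by simp

lemma has_real_derivative_hnat_comp:
  assumes "(g has_real_derivative g') (at x)" "0 < g x" "g x < 1" "D = ln_odds (g x) * g'"
  shows "((\<lambda>x. hnat (g x)) has_real_derivative D) (at x)"
  using DERIV_chain2[OF has_real_derivative_hnat[OF assms(2,3)] assms(1)] assms(4) by simp

lemma ln_odds_ge_linear:
  assumes "0 < p" "p \<le> 1/2"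
  shows "ln_odds p \<ge> 2 * (1 - 2 * p)"
proof -
  have "(\<lambda>x. ln_odds x - 2 * (1 - 2 * x)) (1/2) \<le> (\<lambda>x. ln_odds x - 2 * (1 - 2 * x)) p"
  proof (rule DERIV_nonpos_imp_nonincreasing[OF assms(2)])
    fix x assume x: "p \<le> x" "x \<le> 1/2"
    hence x0: "0 < x" "x < 1" using assms by auto
    have "4 * (x * (1 - x)) \<le> 1"
      using zero_le_power2[of "2 * x - 1"] by (simp add: power2_eq_square algebra_simps)
    hence "- 1 / (x * (1 - x)) + 4 \<le> 0" using x0 by (simp add: field_simps)
    moreover have "((\<lambda>x. ln_odds x - 2 * (1 - 2 * x)) has_real_derivative
        - 1 / (x * (1 - x)) + 4) (at x)"
      using x0 by (auto intro!: derivative_eq_intros has_real_derivative_ln_odds_comp)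
    ultimately show "\<exists>y. ((\<lambda>x. ln_odds x - 2 * (1 - 2 * x)) has_real_derivative y) (at x) \<and> y \<le> 0"
      by blast
  qed
  thus ?thesis by (simp add: ln_odds_half)
qed

definition odds_weight :: "real \<Rightarrow> real" where
  "odds_weight x = x * (1 - x) * ln_odds x / (1 - 2 * x)"

lemma odds_weight_mono:
  assumes "0 < p1" "p1 \<le> p2" "p2 < 1/2"
  shows "odds_weight p1 \<le> odds_weight p2"
proof (rule DERIV_nonneg_imp_nondecreasing[OF assms(2)])
  fix x assume x: "p1 \<le> x" "x \<le> p2"
  hence x0: "0 < x" "x < 1/2" using assms by auto
  define D where "D = ((1 - 2*x + 2*x^2) * ln_odds x - (1 - 2*x)) / (1 - 2*x)^2"
  have "(odds_weight has_real_derivative D) (at x)"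
  proof -
    have "((\<lambda>x. x * (1 - x) * ln_odds x / (1 - 2*x)) has_real_derivative
       (((1 * (1 - x) + x * (0 - 1)) * ln_odds x + x * (1 - x) * (- 1/(x*(1-x)))) * (1 - 2*x)
        - x * (1 - x) * ln_odds x * (0 - 2 * 1)) / (1 - 2*x)^2) (at x)"
      using x0 by (auto intro!: derivative_eq_intros has_real_derivative_ln_odds_comp
          simp: power2_eq_square)
    moreover have "(((1 * (1 - x) + x * (0 - 1)) * ln_odds x + x * (1 - x) * (- 1/(x*(1-x))))
        * (1 - 2*x) - x * (1 - x) * ln_odds x * (0 - 2 * 1)) / (1 - 2*x)^2 = D"
      using x0 unfolding D_def by (simp add: field_simps) (simp add: algebra_simps power2_eq_square)
    ultimately show ?thesis unfolding odds_weight_def[abs_def] by simp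
  qed
  moreover have "D \<ge> 0"
  proof -
    have "1 - 2*x + 2*x^2 = (1 - x)^2 + x^2" by (simp add: power2_eq_square algebra_simps)
    hence c: "1 - 2*x + 2*x^2 > 0" using x0 by (simp add: add_nonneg_pos)
    have "(1 - 2*x + 2*x^2) * (2 * (1 - 2*x)) \<le> (1 - 2*x + 2*x^2) * ln_odds x"
      using mult_left_mono[OF ln_odds_ge_linear] c x0 by simp
    moreover have "(1 - 2*x + 2*x^2) * (2 * (1 - 2*x)) - (1 - 2*x) = (1 - 2*x)^3"
      by (simp add: algebra_simps power2_eq_square power3_eq_cube)
    moreover have "(1 - 2*x)^3 \<ge> 0" using x0 by simp
    ultimately have "(1 - 2*x + 2*x^2) * ln_odds x - (1 - 2*x) \<ge> 0" by linarith
    thus ?thesis unfolding D_def by simp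
  qed
  ultimately show "\<exists>y. (odds_weight has_real_derivative y) (at x) \<and> y \<ge> 0" by blast
qed

lemma star_alt: "star e x = e + (1 - 2 * e) * x"
  unfolding star_def by (simp add: algebra_simps)

lemma star_one_minus: "star e (1 - p) = 1 - star e p"
  unfolding star_def by (simp add: algebra_simps)

lemma star_in_unit_interval:
  assumes "0 \<le> e" "e \<le> 1" "0 \<le> p" "p \<le> 1"
  shows "0 \<le> star e p" "star e p \<le> 1"
proof -
  have "0 \<le> e * (1 - p) + (1 - e) * p" "0 \<le> e * p + (1 - e) * (1 - p)"
    using assms by (intro add_nonneg_nonneg mult_nonneg_nonneg; simp)+
  moreover have "1 - star e p = e * p + (1 - e) * (1 - p)"
    by (simp add: star_def algebra_simps)
  ultimately show "0 \<le> star e p" "star e p \<le> 1" unfolding star_def by linarith+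
qed

lemma star_ge_self:
  assumes "0 \<le> e" "e < 1/2" "0 < x" "x < 1/2"
  shows "x \<le> star e x" "star e x < 1/2"
proof -
  have "e * (2 * x) \<le> e" "(1 - 2 * e) * x < (1 - 2 * e) * (1/2)"
    using assms by (simp_all add: mult_left_le)
  thus "x \<le> star e x" "star e x < 1/2" unfolding star_alt by (simp_all add: algebra_simps)
qed

lemma odds_weight_star_ge:
  assumes "0 \<le> e" "e < 1/2" "0 < x" "x < 1/2"
  shows "(1 - 2 * e) * (x * (1 - x) * ln_odds x) \<le> star e x * (1 - star e x) * ln_odds (star e x)"
proof -
  let ?a = "star e x"
  have pos: "0 < 1 - 2 * x" "0 < 1 - 2 * ?a" using assms star_ge_self[OF assms] by auto
  have "x * (1 - x) * ln_odds x / (1 - 2 * x) \<le> ?a * (1 - ?a) * ln_odds ?a / (1 - 2 * ?a)"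
    using odds_weight_mono[OF assms(3) star_ge_self[OF assms]] unfolding odds_weight_def .
  hence "x * (1 - x) * ln_odds x * (1 - 2 * ?a) \<le> ?a * (1 - ?a) * ln_odds ?a * (1 - 2 * x)"
    using pos by (simp add: field_simps)
  moreover have ca: "1 - 2 * ?a = (1 - 2 * e) * (1 - 2 * x)" by (simp add: star_alt algebra_simps)
  ultimately have "((1 - 2 * e) * (x * (1 - x) * ln_odds x)) * (1 - 2 * x)
      \<le> (?a * (1 - ?a) * ln_odds ?a) * (1 - 2 * x)"
    unfolding ca by (simp add: algebra_simps)
  thus ?thesis using pos(1) by (simp add: mult_le_cancel_right)
qed

text \<open>The key monotonicity behind Mrs.\ Gerber's lemma: it makes \<open>p0\<close> the minimiser
  of \<open>hnat (star e p) - R * hnat p\<close> for the slope \<open>R\<close> of the supporting line at \<open>p0\<close>.\<close>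
lemma ln_odds_star_ratio_mono:
  assumes e: "0 \<le> e" "e < 1/2" and p: "0 < p1" "p1 \<le> p2" "p2 < 1/2"
  shows "ln_odds (star e p1) / ln_odds p1 \<le> ln_odds (star e p2) / ln_odds p2"
proof (rule DERIV_nonneg_imp_nondecreasing[OF p(2)])
  fix x assume "p1 \<le> x" "x \<le> p2"
  hence x: "0 < x" "x < 1/2" using p by auto
  define c where "c = 1 - 2 * e"
  define a where "a = star e x"
  have a_eq: "a = e + c * x" unfolding a_def c_def star_alt ..
  have a: "0 < a" "a < 1/2" using star_ge_self[OF e x] x unfolding a_def by auto
  define D where "D = (ln_odds a / (x * (1 - x)) - c * ln_odds x / (a * (1 - a))) / (ln_odds x)^2"
  have "((\<lambda>x. ln_odds (e + c * x) / ln_odds x) has_real_derivative D) (at x)"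
    unfolding D_def using x a ln_odds_pos[OF x] unfolding a_eq
    by (auto intro!: derivative_eq_intros has_real_derivative_ln_odds_comp
        simp: field_simps power2_eq_square)
  moreover have "D \<ge> 0"
  proof -
    have "0 < x * (1 - x)" "0 < a * (1 - a)" using x a by auto
    hence "c * ln_odds x / (a * (1 - a)) \<le> ln_odds a / (x * (1 - x))"
      using odds_weight_star_ge[OF e x] unfolding a_def[symmetric] c_def[symmetric]
      by (simp add: field_simps)
    thus ?thesis unfolding D_def by simp
  qed
  ultimately show "\<exists>y. ((\<lambda>x. ln_odds (star e x) / ln_odds x) has_real_derivative y) (at x) \<and> y \<ge> 0"
    unfolding star_alt c_def by blast
qed

lemma star_in_open_unit_interval:
  assumes "0 \<le> e" "e \<le> 1" "0 < x" "x < 1"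
  shows "0 < star e x" "star e x < 1"
proof -
  have pos: "0 < star e y" if "0 < y" "y < 1" for y
    using assms(1,2) that by (cases "e = 1") (simp_all add: star_def add_nonneg_pos)
  show "0 < star e x" using pos assms(3,4) .
  show "star e x < 1" using pos[of "1 - x"] assms(3,4) by (simp add: star_one_minus)
qed

lemma has_real_derivative_hnat_star:
  assumes "0 \<le> e" "e \<le> 1" "0 < x" "x < 1"
  shows "((\<lambda>x. hnat (star e x)) has_real_derivative (1 - 2 * e) * ln_odds (star e x)) (at x)"
  using star_in_open_unit_interval[OF assms] unfolding star_alt
  by (auto intro!: derivative_eq_intros has_real_derivative_hnat_comp)

lemma continuous_on_hnat_star:
  assumes "0 \<le> e" "e \<le> 1"
  shows "continuous_on {0..1} (\<lambda>x. hnat (star e x))"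
  using star_in_unit_interval[OF assms]
  by (intro continuous_on_compose2[OF continuous_on_hnat]) (auto simp: star_def intro!: continuous_intros)

lemma hnat_star_minus_multiple_ge:
  assumes e: "0 \<le> e" "e < 1/2" and p0: "0 < p0" "p0 < 1/2" and p: "0 \<le> p" "p \<le> 1/2"
  defines "R \<equiv> (1 - 2 * e) * ln_odds (star e p0) / ln_odds p0"
  shows "hnat (star e p0) - R * hnat p0 \<le> hnat (star e p) - R * hnat p"
proof -
  define G where "G x = hnat (star e x) - R * hnat x" for x
  define G' where "G' x = (1 - 2 * e) * ln_odds (star e x) - R * ln_odds x" for x
  have dG: "(G has_real_derivative G' x) (at x)" if "0 < x" "x < 1/2" for x
    unfolding G_def[abs_def] G'_def using e that
    by (intro derivative_intros DERIV_cmult has_real_derivative_hnat_star has_real_derivative_hnat) auto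
  have cont: "continuous_on {a..b} G" if "0 \<le> a" "b \<le> 1" for a b
    unfolding G_def[abs_def] using e that
    by (intro continuous_intros continuous_on_subset[OF continuous_on_hnat_star]
        continuous_on_subset[OF continuous_on_hnat]) auto
  have G'_eq: "G' x = (1 - 2 * e) * ln_odds x
      * (ln_odds (star e x) / ln_odds x - ln_odds (star e p0) / ln_odds p0)"
    if "0 < x" "x < 1/2" for x
    using ln_odds_pos[OF that] unfolding G'_def R_def by (simp add: field_simps)
  have "G p0 \<le> G p"
  proof (cases "p \<le> p0")
    case True
    show ?thesis
    proof (rule DERIV_nonpos_imp_decreasing_open[OF True _ cont])
      fix x assume x: "p < x" "x < p0"
      hence x0: "0 < x" "x < 1/2" using p p0 by auto
      have "ln_odds (star e x) / ln_odds x \<le> ln_odds (star e p0) / ln_odds p0"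
        using ln_odds_star_ratio_mono[OF e x0(1) _ p0(2)] x by simp
      hence "G' x \<le> 0"
        unfolding G'_eq[OF x0] using ln_odds_pos[OF x0] e by (simp add: mult_nonneg_nonpos)
      thus "\<exists>y. (G has_real_derivative y) (at x) \<and> y \<le> 0" using dG[OF x0] by blast
    qed (use p p0 in auto)
  next
    case False
    show ?thesis
    proof (rule DERIV_nonneg_imp_increasing_open[of p0 p, OF _ _ cont])
      fix x assume x: "p0 < x" "x < p"
      hence x0: "0 < x" "x < 1/2" using p p0 by auto
      have "ln_odds (star e p0) / ln_odds p0 \<le> ln_odds (star e x) / ln_odds x"
        using ln_odds_star_ratio_mono[OF e p0(1) _ x0(2)] x by simp
      hence "G' x \<ge> 0"
        unfolding G'_eq[OF x0] using ln_odds_pos[OF x0] e by simp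
      thus "\<exists>y. (G has_real_derivative y) (at x) \<and> y \<ge> 0" using dG[OF x0] by blast
    qed (use False p p0 in auto)
  qed
  thus ?thesis unfolding G_def .
qed

lemma h2_one_minus: "h2 (1 - p) = h2 p"
  unfolding h2_eq_hnat_div_ln2 hnat_one_minus ..

lemma continuous_on_h2: "continuous_on {0..1} h2"
  unfolding h2_eq_hnat_div_ln2[abs_def] by (intro continuous_intros continuous_on_hnat) simp

lemma h2_0 [simp]: "h2 0 = 0" and h2_half [simp]: "h2 (1/2) = 1"
  by (simp_all add: h2_def log_divide)

lemma h2_strict_mono:
  assumes "0 \<le> p1" "p1 < p2" "p2 \<le> 1/2"
  shows "h2 p1 < h2 p2"
proof -
  have "hnat p1 < hnat p2"
  proof (rule DERIV_pos_imp_increasing_open[OF assms(2)])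
    fix x assume "p1 < x" "x < p2"
    hence x: "0 < x" "x < 1/2" using assms by auto
    show "\<exists>y. (hnat has_real_derivative y) (at x) \<and> 0 < y"
      using has_real_derivative_hnat[of x] ln_odds_pos[OF x] x by auto
  qed (rule continuous_on_subset[OF continuous_on_hnat], use assms in auto)
  thus ?thesis unfolding h2_eq_hnat_div_ln2 by (simp add: divide_strict_right_mono)
qed

lemma h2_mono:
  assumes "0 \<le> p1" "p1 \<le> p2" "p2 \<le> 1/2"
  shows "h2 p1 \<le> h2 p2"
  using h2_strict_mono[OF assms(1) _ assms(3)] assms(2) by (cases "p1 = p2") auto

lemma h2_le_h2_if_closer_to_half:
  assumes "0 \<le> x" "x \<le> 1" "0 \<le> y" "y \<le> 1" "\<bar>y - 1/2\<bar> \<le> \<bar>x - 1/2\<bar>"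
  shows "h2 x \<le> h2 y"
proof -
  have "h2 (min x (1 - x)) \<le> h2 (min y (1 - y))"
    by (rule h2_mono) (use assms in \<open>auto simp: min_def abs_if split: if_splits\<close>)
  moreover have "h2 (min x (1 - x)) = h2 x" "h2 (min y (1 - y)) = h2 y"
    by (simp_all add: min_def h2_one_minus)
  ultimately show ?thesis by simp
qed

lemma h2_nonneg: "0 \<le> p \<Longrightarrow> p \<le> 1 \<Longrightarrow> 0 \<le> h2 p"
  using h2_le_h2_if_closer_to_half[of 0 p] by (auto simp: abs_if split: if_splits)

lemma h2_le_1: "0 \<le> p \<Longrightarrow> p \<le> 1 \<Longrightarrow> h2 p \<le> 1"
  using h2_le_h2_if_closer_to_half[of p "1/2"] by (simp add: abs_if)

lemma h2_surj_half:
  assumes "0 \<le> y" "y \<le> 1"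
  obtains p where "0 \<le> p" "p \<le> 1/2" "h2 p = y"
  using IVT'[of h2 0 y "1/2"] assms continuous_on_subset[OF continuous_on_h2, of "{0..1/2}"]
  by auto

lemma h2_le_h2_star:
  assumes "0 \<le> e" "e \<le> 1" "0 \<le> p" "p \<le> 1"
  shows "h2 p \<le> h2 (star e p)" "h2 e \<le> h2 (star e p)"
proof -
  have "\<bar>(1 - 2 * e) * (p - 1/2)\<bar> \<le> \<bar>p - 1/2\<bar>" "\<bar>(1 - 2 * p) * (e - 1/2)\<bar> \<le> \<bar>e - 1/2\<bar>"
    using assms by (simp_all add: abs_mult mult_left_le_one_le)
  moreover have "star e p - 1/2 = (1 - 2 * e) * (p - 1/2)" "star e p - 1/2 = (1 - 2 * p) * (e - 1/2)"
    by (simp_all add: star_def algebra_simps)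
  ultimately have "\<bar>star e p - 1/2\<bar> \<le> \<bar>p - 1/2\<bar>" "\<bar>star e p - 1/2\<bar> \<le> \<bar>e - 1/2\<bar>"
    by simp_all
  thus "h2 p \<le> h2 (star e p)" "h2 e \<le> h2 (star e p)"
    using h2_le_h2_if_closer_to_half star_in_unit_interval[OF assms] assms by blast+
qed

text \<open>In the coordinates \<open>(h2 p, h2 (star e p))\<close> the graph lies above a line through the point
  given by \<open>p0\<close>: this is the convexity of \<open>h2 (star e (h2\<^sup>-\<^sup>1 x))\<close>.\<close>
lemma h2_star_supporting_line:
  assumes e: "0 \<le> e" "e \<le> 1/2" and p0: "0 \<le> p0" "p0 \<le> 1/2"
  obtains R where "\<And>p. 0 \<le> p \<Longrightarrow> p \<le> 1 \<Longrightarrow> h2 (star e p0) + R * (h2 p - h2 p0) \<le> h2 (star e p)"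
proof -
  consider "p0 = 0" | "p0 = 1/2" | "e = 1/2" | "0 < p0" "p0 < 1/2" "e < 1/2"
    using e p0 by linarith
  thus ?thesis
  proof cases
    case 1
    show ?thesis by (rule that[of 0]) (use 1 e h2_le_h2_star(2) in \<open>simp add: star_def\<close>)
  next
    case 2
    have s: "star e (1/2) = 1/2" unfolding star_def by (simp add: field_simps)
    have "h2 (star e p0) + 1 * (h2 p - h2 p0) \<le> h2 (star e p)" if "0 \<le> p" "p \<le> 1" for p
      using h2_le_h2_star(1)[of e p] e that unfolding 2 s by simp
    thus ?thesis by (rule that)
  next
    case 3
    show ?thesis by (rule that[of 0]) (simp add: 3 star_def field_simps)
  next
    case 4
    define R where "R = (1 - 2 * e) * ln_odds (star e p0) / ln_odds p0"
    have half: "hnat (star e p0) - R * hnat p0 \<le> hnat (star e p) - R * hnat p"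
      if "0 \<le> p" "p \<le> 1/2" for p
      using hnat_star_minus_multiple_ge[OF e(1) 4(3) 4(1,2) that] unfolding R_def .
    have "hnat (star e p0) - R * hnat p0 \<le> hnat (star e p) - R * hnat p"
      if "0 \<le> p" "p \<le> 1" for p
    proof (cases "p \<le> 1/2")
      case False
      thus ?thesis using half[of "1 - p"] that by (simp add: star_one_minus hnat_one_minus)
    qed (use half that in simp)
    hence "(hnat (star e p0) - R * hnat p0) / ln 2 \<le> (hnat (star e p) - R * hnat p) / ln 2"
      if "0 \<le> p" "p \<le> 1" for p
      using that by (simp add: divide_right_mono)
    thus ?thesis by (intro that[of R]) (simp add: h2_eq_hnat_div_ln2 field_simps)
  qed
qed

section \<open>Weighted binary entropy and Mrs.\ Gerber's lemma\<close>

text \<open>The contribution \<open>h2w\<close> of a slice after its binary variable passes through a binary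
  symmetric channel with crossover probability \<open>e\<close>.\<close>
definition h2w_bsc :: "real \<Rightarrow> real \<Rightarrow> real \<Rightarrow> real" where
  "h2w_bsc e a b = h2w (a * (1 - e) + b * e) (a * e + b * (1 - e))"

lemma xlog_mult:
  "0 \<le> x \<Longrightarrow> 0 \<le> y \<Longrightarrow> x * y * log 2 (x * y) = x * y * log 2 x + x * y * log 2 y"
  by (cases "x = 0 \<or> y = 0") (auto simp: log_mult algebra_simps)

lemma h2w_scale:
  assumes "0 \<le> c" "0 \<le> a" "0 \<le> b"
  shows "h2w (c * a) (c * b) = c * h2w a b"
proof -
  have "c * a + c * b = c * (a + b)" by (simp add: algebra_simps)
  thus ?thesis unfolding h2w_def
    using xlog_mult[of c a] xlog_mult[of c b] xlog_mult[of c "a + b"] assms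
    by (simp add: algebra_simps)
qed

lemma h2w_one_minus: "h2w p (1 - p) = h2 p"
  unfolding h2w_def h2_def by simp

lemma h2w_commute: "h2w a b = h2w b a"
  unfolding h2w_def by (simp add: algebra_simps)

lemma h2w_0 [simp]: "h2w a 0 = 0" "h2w 0 b = 0"
  unfolding h2w_def by simp_all

lemma h2w_diag: "0 \<le> x \<Longrightarrow> h2w x x = 2 * x"
  unfolding h2w_def by (cases "x = 0") (auto simp: log_mult algebra_simps)

lemma divide_sum_in_unit_interval:
  fixes a b :: real
  assumes "0 \<le> a" "0 \<le> b" "0 < a + b"
  shows "0 \<le> a / (a + b)" "a / (a + b) \<le> 1"
  using assms by (simp_all add: divide_le_eq)

lemma h2w_eq_h2:
  assumes "0 \<le> a" "0 \<le> b" "0 < a + b"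
  shows "h2w a b = (a + b) * h2 (a / (a + b))"
proof -
  have "(a + b) * (a / (a + b)) = a" "(a + b) * (1 - a / (a + b)) = b"
    using assms by (simp_all add: field_simps)
  hence "h2w a b = h2w ((a + b) * (a / (a + b))) ((a + b) * (1 - a / (a + b)))"
    by simp
  also have "\<dots> = (a + b) * h2w (a / (a + b)) (1 - a / (a + b))"
    using assms divide_sum_in_unit_interval[OF assms] by (intro h2w_scale) auto
  finally show ?thesis by (simp add: h2w_one_minus)
qed

lemma h2w_nonneg:
  assumes "0 \<le> a" "0 \<le> b"
  shows "0 \<le> h2w a b"
proof (cases "a + b = 0")
  case False
  thus ?thesis using assms h2w_eq_h2[of a b] h2_nonneg divide_sum_in_unit_interval[of a b] by simp
qed (use assms in \<open>simp add: add_nonneg_eq_0_iff\<close>)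

lemma h2w_le_add:
  assumes "0 \<le> a" "0 \<le> b"
  shows "h2w a b \<le> a + b"
proof (cases "a + b = 0")
  case False
  thus ?thesis using assms h2w_eq_h2[of a b] h2_le_1 divide_sum_in_unit_interval[of a b]
    by (simp add: mult_left_le)
qed (use assms in \<open>simp add: add_nonneg_eq_0_iff\<close>)

lemma h2w_bsc_eq_h2_star:
  assumes "0 \<le> a" "0 \<le> b" "0 < a + b" "0 \<le> e" "e \<le> 1"
  shows "h2w_bsc e a b = (a + b) * h2 (star e (a / (a + b)))"
proof -
  define s where "s = star e (a / (a + b))"
  have s: "0 \<le> s" "s \<le> 1"
    unfolding s_def using assms divide_sum_in_unit_interval[OF assms(1-3)]
    by (simp_all add: star_in_unit_interval)
  have q: "(a + b) * (a / (a + b)) = a" using assms(3) by simp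
  have "(a + b) * s = e * ((a + b) - (a + b) * (a / (a + b))) + (1 - e) * ((a + b) * (a / (a + b)))"
    unfolding s_def star_def by (simp add: algebra_simps)
  hence "a * (1 - e) + b * e = (a + b) * s" unfolding q by (simp add: algebra_simps)
  moreover have "a * e + b * (1 - e) = (a + b) - (a * (1 - e) + b * e)"
    "(a + b) * (1 - s) = (a + b) - (a + b) * s" by (simp_all add: algebra_simps)
  ultimately have mix: "a * (1 - e) + b * e = (a + b) * s" "a * e + b * (1 - e) = (a + b) * (1 - s)"
    by linarith+
  have "h2w_bsc e a b = h2w ((a + b) * s) ((a + b) * (1 - s))"
    unfolding h2w_bsc_def mix ..
  also have "\<dots> = (a + b) * h2w s (1 - s)"
    by (rule h2w_scale) (use assms s in auto)
  finally show ?thesis unfolding h2w_one_minus s_def .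
qed

lemma h2w_bsc_eq:
  assumes "0 \<le> a" "0 \<le> b" "0 \<le> e" "e \<le> 1"
  shows "h2w_bsc e a b = h2w a b + (a + b) * h2 e
           - h2w (a * (1 - e)) (b * e) - h2w (a * e) (b * (1 - e))"
proof -
  have "a * (1 - e) * log 2 (a * (1 - e)) = a * (1 - e) * log 2 a + a * (1 - e) * log 2 (1 - e)"
    "b * e * log 2 (b * e) = b * e * log 2 b + b * e * log 2 e"
    "a * e * log 2 (a * e) = a * e * log 2 a + a * e * log 2 e"
    "b * (1 - e) * log 2 (b * (1 - e)) = b * (1 - e) * log 2 b + b * (1 - e) * log 2 (1 - e)"
    using assms by (simp_all add: xlog_mult)
  moreover have "a * (1 - e) + b * e + (a * e + b * (1 - e)) = a + b" by (simp add: algebra_simps)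
  ultimately show ?thesis unfolding h2w_bsc_def h2w_def h2_def by (simp add: algebra_simps)
qed

lemma h2w_bsc_le:
  assumes "0 \<le> a" "0 \<le> b" "0 \<le> e" "e \<le> 1"
  shows "h2w_bsc e a b \<le> h2w a b + (a + b) * h2 e"
  using h2w_bsc_eq[OF assms] h2w_nonneg[of "a * (1 - e)" "b * e"] h2w_nonneg[of "a * e" "b * (1 - e)"]
    assms by simp

lemma h2w_bsc_if_deterministic:
  assumes "0 \<le> a" "0 \<le> b" "a = 0 \<or> b = 0" "0 \<le> e" "e \<le> 1"
  shows "h2w_bsc e a b = (a + b) * h2 e"
proof (cases "a = 0")
  case True
  hence "h2w_bsc e a b = b * h2w e (1 - e)"
    unfolding h2w_bsc_def using assms h2w_scale[of b e "1 - e"] by simp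
  thus ?thesis using True by (simp add: h2w_one_minus)
next
  case False
  hence "b = 0" using assms(3) by simp
  hence "h2w_bsc e a b = a * h2w e (1 - e)"
    unfolding h2w_bsc_def using assms h2w_scale[of a "1 - e" e] by (simp add: h2w_commute)
  thus ?thesis using \<open>b = 0\<close> by (simp add: h2w_one_minus)
qed

lemma sum_h2w_bsc_le:
  assumes "\<And>i. i \<in> I \<Longrightarrow> 0 \<le> a i" "\<And>i. i \<in> I \<Longrightarrow> 0 \<le> b i"
    and "(\<Sum>i\<in>I. a i + b i) = 1" "0 \<le> e" "e \<le> 1"
  shows "(\<Sum>i\<in>I. h2w_bsc e (a i) (b i)) \<le> (\<Sum>i\<in>I. h2w (a i) (b i)) + h2 e"
proof -
  have "(\<Sum>i\<in>I. h2w_bsc e (a i) (b i)) \<le> (\<Sum>i\<in>I. h2w (a i) (b i) + (a i + b i) * h2 e)"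
    using assms by (intro sum_mono h2w_bsc_le) auto
  also have "\<dots> = (\<Sum>i\<in>I. h2w (a i) (b i)) + h2 e"
    using assms(3) by (simp add: sum.distrib sum_distrib_right[symmetric])
  finally show ?thesis .
qed

text \<open>It follows by summing the supporting line at \<open>p\<close>
  over the slices.\<close>
lemma mrs_gerber:
  assumes "\<And>i. i \<in> I \<Longrightarrow> 0 \<le> a i" "\<And>i. i \<in> I \<Longrightarrow> 0 \<le> b i"
    and total: "(\<Sum>i\<in>I. a i + b i) = 1"
    and "0 \<le> e" "e \<le> 1/2" "0 \<le> p" "p \<le> 1/2"
    and h2_p: "h2 p = (\<Sum>i\<in>I. h2w (a i) (b i))"
  shows "h2 (star e p) \<le> (\<Sum>i\<in>I. h2w_bsc e (a i) (b i))"
proof -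
  obtain R where R: "\<And>q. 0 \<le> q \<Longrightarrow> q \<le> 1 \<Longrightarrow> h2 (star e p) + R * (h2 q - h2 p) \<le> h2 (star e q)"
    using h2_star_supporting_line assms(4-7) by blast
  have slice: "(a i + b i) * h2 (star e p) + R * (h2w (a i) (b i) - (a i + b i) * h2 p)
      \<le> h2w_bsc e (a i) (b i)" if i: "i \<in> I" for i
  proof (cases "a i + b i = 0")
    case False
    hence ab: "0 < a i + b i" using assms(1,2)[OF i] by simp
    let ?q = "a i / (a i + b i)"
    have "(a i + b i) * (h2 (star e p) + R * (h2 ?q - h2 p)) \<le> (a i + b i) * h2 (star e ?q)"
      using R divide_sum_in_unit_interval[OF assms(1,2)[OF i] ab] ab by (intro mult_left_mono) auto
    thus ?thesis
      using assms(1,2,4,5) i ab by (simp add: h2w_bsc_eq_h2_star h2w_eq_h2 algebra_simps)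
  qed (use assms(1,2)[OF i] in \<open>simp add: h2w_bsc_def add_nonneg_eq_0_iff\<close>)
  have "h2 (star e p) = (\<Sum>i\<in>I. a i + b i) * h2 (star e p)
        + R * ((\<Sum>i\<in>I. h2w (a i) (b i)) - (\<Sum>i\<in>I. a i + b i) * h2 p)"
    unfolding total h2_p[symmetric] by simp
  also have "\<dots> = (\<Sum>i\<in>I. (a i + b i) * h2 (star e p) + R * (h2w (a i) (b i) - (a i + b i) * h2 p))"
    by (simp add: sum.distrib sum_subtractf sum_distrib_left sum_distrib_right algebra_simps)
  also have "\<dots> \<le> (\<Sum>i\<in>I. h2w_bsc e (a i) (b i))"
    by (rule sum_mono) (rule slice)
  finally show ?thesis .
qed

section \<open>The binary source and the wiretap channel\<close>

lemma pmf_bind_map_Pair: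
  "pmf (bind_pmf M (\<lambda>x. map_pmf (Pair x) (N x))) (x, y) = pmf M x * pmf (N x) y"
proof -
  have "pmf (map_pmf (Pair x') (N x')) (x, y) = (if x' = x then pmf (N x) y else 0)" for x'
  proof (cases "x' = x")
    case True
    have "pmf (map_pmf (Pair x) (N x)) (Pair x y) = pmf (N x) y"
      by (rule pmf_map_inj') (simp add: inj_def)
    thus ?thesis using True by simp
  qed (auto simp: pmf_eq_0_set_pmf)
  hence "pmf (bind_pmf M (\<lambda>x. map_pmf (Pair x) (N x))) (x, y)
      = measure_pmf.expectation M (\<lambda>x'. if x' = x then pmf (N x) y else 0)"
    by (simp add: pmf_bind)
  also have "\<dots> = pmf M x * pmf (N x) y"
    by (subst integral_measure_pmf_real[where A="{x}"]) (auto split: if_splits)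
  finally show ?thesis .
qed

lemma pmf_bind_bool:
  "pmf (bind_pmf M f) y = pmf M True * pmf (f True) y + pmf M False * pmf (f False) y"
  by (simp add: pmf_bind integral_measure_pmf_real[where A=UNIV] UNIV_bool)

lemma pmf_bec:
  assumes "0 \<le> \<beta>" "\<beta> \<le> 1"
  shows "pmf (bec \<beta> a) b = (if b = None then \<beta> else if b = Some a then 1 - \<beta> else 0)"
  using assms by (cases b) (auto simp: bec_def map_pmf_def pmf_bind_bool)

lemma pmf_bsc:
  assumes "0 \<le> \<zeta>" "\<zeta> \<le> 1"
  shows "pmf (bsc \<zeta> x) z = (if z = x then 1 - \<zeta> else \<zeta>)"
  using assms by (cases x; cases z) (simp_all add: bsc_def map_pmf_def pmf_bind_bool)

text \<open>An instance of \<open>bind_commute_pmf\<close> that \<open>simp\<close> can use as an oriented rule: it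
  moves the binary symmetric channel to the front of a chain of binds.\<close>
lemma bind_commute_bsc:
  "bind_pmf N (\<lambda>y. bind_pmf (bsc p x) (f y)) = bind_pmf (bsc p x) (\<lambda>e. bind_pmf N (\<lambda>y. f y e))"
  by (rule bind_commute_pmf)

lemma UNIV_bool_option: "(UNIV :: bool option set) = {None, Some True, Some False}"
  using UNIV_option_conv[where 'a=bool] by (auto simp: UNIV_bool)

lemma map_src_joint:
  "map_pmf (\<lambda>w. (sA w, sB w)) (src_joint \<beta> \<epsilon> pV pU) =
     bind_pmf (bernoulli_pmf (1/2)) (\<lambda>a. map_pmf (Pair a) (bec \<beta> a))"
  "map_pmf (\<lambda>w. (sA w, (sU w, sB w))) (src_joint \<beta> \<epsilon> pV pU) =
     bind_pmf (bernoulli_pmf (1/2)) (\<lambda>a. map_pmf (Pair a) (pair_pmf (bind_pmf (pV a) pU) (bec \<beta> a)))"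
  "map_pmf (\<lambda>w. (sA w, (sU w, sE w))) (src_joint \<beta> \<epsilon> pV pU) =
     bind_pmf (bernoulli_pmf (1/2)) (\<lambda>a. map_pmf (Pair a) (pair_pmf (bind_pmf (pV a) pU) (bsc \<epsilon> a)))"
  by (simp_all add: src_joint_def sU_def sA_def sB_def sE_def map_bind_pmf bind_assoc_pmf map_pmf_def
      bind_return_pmf pair_pmf_def bind_commute_pmf[where A="bec _ _"] bind_commute_bsc)

lemma map_chan_joint:
  "map_pmf cY (chan_joint \<zeta> pX pT pQ) = pX"
  "map_pmf (\<lambda>w. (cY w, cQ w)) (chan_joint \<zeta> pX pT pQ) =
     bind_pmf pX (\<lambda>x. map_pmf (Pair x) (bind_pmf (pT x) pQ))"
  "map_pmf (\<lambda>w. (cY w, (cT w, cQ w))) (chan_joint \<zeta> pX pT pQ) =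
     bind_pmf pX (\<lambda>x. map_pmf (Pair x) (bind_pmf (pT x) (\<lambda>t. map_pmf (Pair t) (pQ t))))"
  "map_pmf (\<lambda>w. (cZ w, cQ w)) (chan_joint \<zeta> pX pT pQ) =
     bind_pmf pX (\<lambda>x. pair_pmf (bsc \<zeta> x) (bind_pmf (pT x) pQ))"
  "map_pmf (\<lambda>w. (cZ w, (cT w, cQ w))) (chan_joint \<zeta> pX pT pQ) =
     bind_pmf pX (\<lambda>x. pair_pmf (bsc \<zeta> x) (bind_pmf (pT x) (\<lambda>t. map_pmf (Pair t) (pQ t))))"
  by (simp_all add: chan_joint_def cY_def cT_def cQ_def cZ_def map_bind_pmf bind_assoc_pmf map_pmf_def
      bind_return_pmf bind_return_pmf' pair_pmf_def bind_commute_bsc)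

locale binary_source =
  fixes \<beta> \<epsilon> :: real and pV :: "bool \<Rightarrow> nat pmf" and pU :: "nat \<Rightarrow> nat pmf" and UU :: "nat set"
  assumes \<beta>_range: "0 \<le> \<beta>" "\<beta> \<le> 1" and \<epsilon>_range: "0 \<le> \<epsilon>" "\<epsilon> \<le> 1"
    and finite_UU: "finite UU" and set_pU: "\<And>v. set_pmf (pU v) \<subseteq> UU"
begin

abbreviation src :: "src_outcome pmf" where
  "src \<equiv> src_joint \<beta> \<epsilon> pV pU"

definition pAU :: "bool \<Rightarrow> nat \<Rightarrow> real" where
  "pAU a u = pmf (bind_pmf (pV a) pU) u / 2"

definition H_A_U :: real where
  "H_A_U = (\<Sum>u\<in>UU. h2w (pAU True u) (pAU False u))"

lemma pAU_nonneg: "0 \<le> pAU a u"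
  by (simp add: pAU_def)

lemma sum_pAU: "(\<Sum>u\<in>UU. pAU True u + pAU False u) = 1"
proof -
  have "(\<Sum>u\<in>UU. pmf (bind_pmf (pV a) pU) u) = 1" for a
    by (rule sum_pmf_eq_1[OF finite_UU]) (use set_pU in auto)
  thus ?thesis by (simp add: pAU_def sum.distrib sum_divide_distrib[symmetric])
qed

lemma H_A_U_nonneg: "0 \<le> H_A_U"
  unfolding H_A_U_def by (intro sum_nonneg h2w_nonneg pAU_nonneg)

lemma H_A_U_le_1: "H_A_U \<le> 1"
proof -
  have "H_A_U \<le> (\<Sum>u\<in>UU. pAU True u + pAU False u)"
    unfolding H_A_U_def by (intro sum_mono h2w_le_add pAU_nonneg)
  thus ?thesis unfolding sum_pAU .
qed

lemma sU_in_UU: "w \<in> set_pmf src \<Longrightarrow> sU w \<in> UU"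
  using set_pU by (auto simp: src_joint_def sU_def)

lemma CH_A_B: "CH src sA sB = \<beta>"
proof -
  have "CH src sA sB = (\<Sum>b\<in>UNIV. h2w (1/2 * pmf (bec \<beta> True) b) (1/2 * pmf (bec \<beta> False) b))"
    by (rule CH_bool_eq_sum_h2w) (auto simp: map_src_joint pmf_bind_map_Pair)
  also have "\<dots> = \<beta>"
    using \<beta>_range by (simp add: UNIV_bool_option pmf_bec h2w_diag)
  finally show ?thesis .
qed

lemma CH_A_UB: "CH src sA (\<lambda>w. (sU w, sB w)) = \<beta> * H_A_U"
proof -
  have "CH src sA (\<lambda>w. (sU w, sB w)) = (\<Sum>y\<in>UU \<times> UNIV.
      h2w (pAU True (fst y) * pmf (bec \<beta> True) (snd y)) (pAU False (fst y) * pmf (bec \<beta> False) (snd y)))"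
    by (rule CH_bool_eq_sum_h2w)
      (auto simp: map_src_joint pmf_bind_map_Pair pmf_pair pAU_def finite_UU sU_in_UU)
  also have "\<dots> = (\<Sum>u\<in>UU. \<Sum>b\<in>UNIV.
      h2w (pAU True u * pmf (bec \<beta> True) b) (pAU False u * pmf (bec \<beta> False) b))"
    by (simp add: sum.cartesian_product case_prod_unfold)
  also have "\<dots> = (\<Sum>u\<in>UU. \<beta> * h2w (pAU True u) (pAU False u))"
  proof (intro sum.cong refl)
    fix u
    have "h2w (\<beta> * pAU True u) (\<beta> * pAU False u) = \<beta> * h2w (pAU True u) (pAU False u)"
      using \<beta>_range pAU_nonneg by (intro h2w_scale) auto
    thus "(\<Sum>b\<in>UNIV. h2w (pAU True u * pmf (bec \<beta> True) b) (pAU False u * pmf (bec \<beta> False) b))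
        = \<beta> * h2w (pAU True u) (pAU False u)"
      using \<beta>_range by (simp add: UNIV_bool_option pmf_bec mult.commute)
  qed
  finally show ?thesis by (simp add: H_A_U_def sum_distrib_left)
qed

lemma CH_A_UE:
  "CH src sA (\<lambda>w. (sU w, sE w)) = H_A_U + h2 \<epsilon> - (\<Sum>u\<in>UU. h2w_bsc \<epsilon> (pAU True u) (pAU False u))"
proof -
  have "CH src sA (\<lambda>w. (sU w, sE w)) = (\<Sum>y\<in>UU \<times> UNIV.
      h2w (pAU True (fst y) * pmf (bsc \<epsilon> True) (snd y)) (pAU False (fst y) * pmf (bsc \<epsilon> False) (snd y)))"
    by (rule CH_bool_eq_sum_h2w)
      (auto simp: map_src_joint pmf_bind_map_Pair pmf_pair pAU_def finite_UU sU_in_UU)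
  also have "\<dots> = (\<Sum>u\<in>UU. \<Sum>e\<in>UNIV.
      h2w (pAU True u * pmf (bsc \<epsilon> True) e) (pAU False u * pmf (bsc \<epsilon> False) e))"
    by (simp add: sum.cartesian_product case_prod_unfold)
  also have "\<dots> = (\<Sum>u\<in>UU. h2w (pAU True u * (1 - \<epsilon>)) (pAU False u * \<epsilon>)
                          + h2w (pAU True u * \<epsilon>) (pAU False u * (1 - \<epsilon>)))"
    using \<epsilon>_range by (simp add: UNIV_bool pmf_bsc add.commute)
  also have "\<dots> = (\<Sum>u\<in>UU. h2w (pAU True u) (pAU False u) + (pAU True u + pAU False u) * h2 \<epsilon>
                          - h2w_bsc \<epsilon> (pAU True u) (pAU False u))"
    using \<epsilon>_range pAU_nonneg by (intro sum.cong refl) (simp add: h2w_bsc_eq)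
  also have "\<dots> = H_A_U + h2 \<epsilon> - (\<Sum>u\<in>UU. h2w_bsc \<epsilon> (pAU True u) (pAU False u))"
    using sum_pAU by (simp add: H_A_U_def sum.distrib sum_subtractf sum_distrib_right[symmetric])
  finally show ?thesis .
qed

lemma CMI_U_A_B: "CMI src sU sA sB = \<beta> * (1 - H_A_U)"
  unfolding CMI_eq_CH_diff CH_A_B CH_A_UB by (simp add: algebra_simps)

lemma CMI_V_A_if_determined:
  assumes "\<And>w. w \<in> set_pmf src \<Longrightarrow> sA w = Ahat (sV w) (sB w)"
  shows "CMI src sV sA sB = \<beta>" "CMI src sV sA (\<lambda>w. (sU w, sB w)) = \<beta> * H_A_U"
proof -
  have "CH src sA (\<lambda>w. (sV w, sB w)) = 0"
    by (rule CH_eq_0_if_determined[where f="case_prod Ahat"]) (use assms in auto)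
  thus "CMI src sV sA sB = \<beta>" unfolding CMI_eq_CH_diff CH_A_B by simp
  have "CH src sA (\<lambda>w. (sV w, (sU w, sB w))) = 0"
    by (rule CH_eq_0_if_determined[where f="\<lambda>(v, u, b). Ahat v b"]) (use assms in auto)
  thus "CMI src sV sA (\<lambda>w. (sU w, sB w)) = \<beta> * H_A_U" unfolding CMI_eq_CH_diff CH_A_UB by simp
qed

lemma CH_A_UE_le:
  assumes "\<epsilon> \<le> 1/2" "0 \<le> u" "u \<le> 1/2" "h2 u = H_A_U"
  shows "CH src sA (\<lambda>w. (sU w, sE w)) \<le> h2 \<epsilon> + h2 u - h2 (star \<epsilon> u)"
proof -
  have "h2 (star \<epsilon> u) \<le> (\<Sum>i\<in>UU. h2w_bsc \<epsilon> (pAU True i) (pAU False i))"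
    by (rule mrs_gerber[OF pAU_nonneg pAU_nonneg sum_pAU \<epsilon>_range(1) assms(1-3)])
      (simp add: assms(4) H_A_U_def)
  thus ?thesis unfolding CH_A_UE assms(4) by simp
qed

end

locale binary_wiretap_channel =
  fixes \<zeta> :: real and pX :: "bool pmf" and pT :: "bool \<Rightarrow> nat pmf" and pQ :: "nat \<Rightarrow> nat pmf"
    and TT QQ :: "nat set"
  assumes \<zeta>_range: "0 \<le> \<zeta>" "\<zeta> \<le> 1" and finite_TT: "finite TT" and finite_QQ: "finite QQ"
    and set_pT: "\<And>x. set_pmf (pT x) \<subseteq> TT" and set_pQ: "\<And>t. set_pmf (pQ t) \<subseteq> QQ"
begin

abbreviation chan :: "chan_outcome pmf" where
  "chan \<equiv> chan_joint \<zeta> pX pT pQ"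

definition pXQ :: "bool \<Rightarrow> nat \<Rightarrow> real" where
  "pXQ x q = pmf pX x * pmf (bind_pmf (pT x) pQ) q"

definition pXTQ :: "bool \<Rightarrow> nat \<times> nat \<Rightarrow> real" where
  "pXTQ x tq = pmf pX x * pmf (pT x) (fst tq) * pmf (pQ (fst tq)) (snd tq)"

definition H_X_Q :: real where
  "H_X_Q = (\<Sum>q\<in>QQ. h2w (pXQ True q) (pXQ False q))"

lemma pXQ_nonneg: "0 \<le> pXQ x q"
  by (simp add: pXQ_def)

lemma pXTQ_nonneg: "0 \<le> pXTQ x tq"
  by (simp add: pXTQ_def)

lemma sum_pXQ: "(\<Sum>q\<in>QQ. pXQ True q + pXQ False q) = 1"
proof -
  have "(\<Sum>q\<in>QQ. pmf (bind_pmf (pT x) pQ) q) = 1" for x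
    by (rule sum_pmf_eq_1[OF finite_QQ]) (use set_pQ in auto)
  thus ?thesis
    by (simp add: pXQ_def sum.distrib sum_distrib_left[symmetric] pmf_True_plus_pmf_False)
qed

lemma sum_pXTQ: "(\<Sum>tq\<in>TT \<times> QQ. pXTQ True tq + pXTQ False tq) = 1"
proof -
  have "(\<Sum>q\<in>QQ. pmf (pQ t) q) = 1" for t
    by (rule sum_pmf_eq_1[OF finite_QQ]) (use set_pQ in auto)
  moreover have "(\<Sum>t\<in>TT. pmf (pT x) t) = 1" for x
    by (rule sum_pmf_eq_1[OF finite_TT]) (use set_pT in auto)
  ultimately show ?thesis
    by (simp add: pXTQ_def sum.cartesian_product' sum.distrib sum_distrib_left[symmetric]
        pmf_True_plus_pmf_False)
qed

lemma H_X_Q_nonneg: "0 \<le> H_X_Q"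
  unfolding H_X_Q_def by (intro sum_nonneg h2w_nonneg pXQ_nonneg)

lemma H_X_Q_le_1: "H_X_Q \<le> 1"
proof -
  have "H_X_Q \<le> (\<Sum>q\<in>QQ. pXQ True q + pXQ False q)"
    unfolding H_X_Q_def by (intro sum_mono h2w_le_add pXQ_nonneg)
  thus ?thesis unfolding sum_pXQ .
qed

lemma cT_cQ_in_TT_QQ: "w \<in> set_pmf chan \<Longrightarrow> cT w \<in> TT \<and> cQ w \<in> QQ"
  using set_pT set_pQ by (auto simp: chan_joint_def cT_def cQ_def)

lemma Hv_Y: "Hv chan cY = h2w (pmf pX True) (pmf pX False)"
  unfolding Hv_def map_chan_joint ent_bool ..

lemma Hv_Y_le_1: "Hv chan cY \<le> 1"
  using h2w_le_add[of "pmf pX True" "pmf pX False"] unfolding Hv_Y pmf_True_plus_pmf_False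
  by simp

lemma CH_Y_Q: "CH chan cY cQ = H_X_Q"
  unfolding H_X_Q_def
  by (rule CH_bool_eq_sum_h2w)
    (auto simp: map_chan_joint pmf_bind_map_Pair pXQ_def finite_QQ cT_cQ_in_TT_QQ)

lemma CH_Y_TQ: "CH chan cY (\<lambda>w. (cT w, cQ w)) = (\<Sum>tq\<in>TT \<times> QQ. h2w (pXTQ True tq) (pXTQ False tq))"
  by (rule CH_bool_eq_sum_h2w)
    (auto simp: map_chan_joint pmf_bind_map_Pair pXTQ_def finite_TT finite_QQ cT_cQ_in_TT_QQ)

lemma CH_Z_Q: "CH chan cZ cQ = (\<Sum>q\<in>QQ. h2w_bsc \<zeta> (pXQ True q) (pXQ False q))"
proof -
  let ?P = "\<lambda>z q. pXQ True q * pmf (bsc \<zeta> True) z + pXQ False q * pmf (bsc \<zeta> False) z"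
  have "CH chan cZ cQ = (\<Sum>q\<in>QQ. h2w (?P True q) (?P False q))"
    by (rule CH_bool_eq_sum_h2w)
      (auto simp: map_chan_joint pmf_bind_bool pmf_pair pXQ_def finite_QQ cT_cQ_in_TT_QQ mult_ac)
  thus ?thesis using \<zeta>_range by (simp add: h2w_bsc_def pmf_bsc)
qed

lemma CH_Z_TQ:
  "CH chan cZ (\<lambda>w. (cT w, cQ w)) = (\<Sum>tq\<in>TT \<times> QQ. h2w_bsc \<zeta> (pXTQ True tq) (pXTQ False tq))"
proof -
  let ?P = "\<lambda>z tq. pXTQ True tq * pmf (bsc \<zeta> True) z + pXTQ False tq * pmf (bsc \<zeta> False) z"
  have "CH chan cZ (\<lambda>w. (cT w, cQ w)) = (\<Sum>tq\<in>TT \<times> QQ. h2w (?P True tq) (?P False tq))"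
    by (rule CH_bool_eq_sum_h2w)
      (auto simp: map_chan_joint pmf_bind_bool pmf_pair pmf_bind_map_Pair pXTQ_def finite_TT
        finite_QQ cT_cQ_in_TT_QQ mult_ac)
  thus ?thesis using \<zeta>_range by (simp add: h2w_bsc_def pmf_bsc)
qed

lemma MI_Q_Y_le: "MI chan cQ cY \<le> 1 - H_X_Q"
  using Hv_Y_le_1 unfolding MI_eq_Hv_minus_CH CH_Y_Q by simp

lemma secrecy_gap_le:
  assumes "\<zeta> \<le> 1/2" "0 \<le> q" "q \<le> 1/2" "h2 q = H_X_Q"
  shows "CMI chan cT cY cQ - CMI chan cT cZ cQ \<le> h2 \<zeta> + h2 q - h2 (star \<zeta> q)"
proof -
  have "h2 (star \<zeta> q) \<le> CH chan cZ cQ"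
    unfolding CH_Z_Q
    by (rule mrs_gerber[OF pXQ_nonneg pXQ_nonneg sum_pXQ \<zeta>_range(1) assms(1-3)])
      (simp add: assms(4) H_X_Q_def)
  moreover have "CH chan cZ (\<lambda>w. (cT w, cQ w)) \<le> CH chan cY (\<lambda>w. (cT w, cQ w)) + h2 \<zeta>"
    unfolding CH_Z_TQ CH_Y_TQ
    by (rule sum_h2w_bsc_le[OF pXTQ_nonneg pXTQ_nonneg sum_pXTQ \<zeta>_range])
  ultimately show ?thesis
    unfolding CMI_eq_CH_diff CH_Y_Q assms(4) by simp
qed

end

section \<open>The inner bound at rate one and zero distortion\<close>

lemma R_in_memI:
  fixes \<beta> \<epsilon> \<zeta> :: real and UU VV QQ TT :: "nat set" and pU :: "nat \<Rightarrow> nat pmf" and pV :: "bool \<Rightarrow> nat pmf"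
    and pQ :: "nat \<Rightarrow> nat pmf" and pT :: "bool \<Rightarrow> nat pmf" and pX :: "bool pmf"
    and Ahat :: "nat \<Rightarrow> bool option \<Rightarrow> bool"
  defines "S \<equiv> src_joint \<beta> \<epsilon> pV pU" and "C \<equiv> chan_joint \<zeta> pX pT pQ"
  assumes "0 \<le> k" "0 \<le> D" "0 \<le> \<Delta>"
    and "finite UU" "finite VV" "finite QQ" "finite TT"
    and "\<And>v. set_pmf (pU v) \<subseteq> UU" "\<And>a. set_pmf (pV a) \<subseteq> VV"
    and "\<And>t. set_pmf (pQ t) \<subseteq> QQ" "\<And>x. set_pmf (pT x) \<subseteq> TT"
    and "CMI S sU sA sB \<le> k * MI C cQ cY" "CMI S sV sA sB \<le> k * MI C cT cY"
    and "measure_pmf.expectation S (\<lambda>w. if sA w \<noteq> Ahat (sV w) (sB w) then 1 else 0) \<le> D"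
    and "\<Delta> \<le> CH S sA (\<lambda>w. (sU w, sE w))
              - pos_part (CMI S sV sA (\<lambda>w. (sU w, sB w)) - k * (CMI C cT cY cQ - CMI C cT cZ cQ))"
  shows "(k, D, \<Delta>) \<in> R_in \<beta> \<epsilon> \<zeta>"
  using assms unfolding R_in_def Let_def by blast

lemma inner_bound_converse:
  assumes "0 \<le> \<beta>" "\<beta> \<le> 1" "0 \<le> \<epsilon>" "\<epsilon> \<le> 1/2" "0 \<le> \<zeta>" "\<zeta> \<le> 1/2"
    and "(1, 0, \<Delta>) \<in> R_in \<beta> \<epsilon> \<zeta>"
  shows "\<exists>u q. 0 \<le> u \<and> u \<le> 1/2 \<and> 0 \<le> q \<and> q \<le> 1/2 \<and>
       \<beta> * (1 - h2 u) \<le> 1 - h2 q \<and>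
       \<Delta> \<le> h2 \<epsilon> + h2 u - h2 (star \<epsilon> u)
            - pos_part (\<beta> * h2 u - (h2 \<zeta> + h2 q - h2 (star \<zeta> q)))"
proof -
  obtain UU QQ TT pU pV pQ pT pX Ahat where
    finite: "finite UU" "finite QQ" "finite TT" and
    supp: "\<And>v. set_pmf (pU v) \<subseteq> UU" "\<And>t. set_pmf (pQ t) \<subseteq> QQ" "\<And>x. set_pmf (pT x) \<subseteq> TT" and
    rate: "CMI (src_joint \<beta> \<epsilon> pV pU) sU sA sB \<le> 1 * MI (chan_joint \<zeta> pX pT pQ) cQ cY" and
    distortion: "measure_pmf.expectation (src_joint \<beta> \<epsilon> pV pU)
      (\<lambda>w. if sA w \<noteq> Ahat (sV w) (sB w) then 1 else 0 :: real) \<le> 0" and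
    equivocation: "\<Delta> \<le> CH (src_joint \<beta> \<epsilon> pV pU) sA (\<lambda>w. (sU w, sE w))
      - pos_part (CMI (src_joint \<beta> \<epsilon> pV pU) sV sA (\<lambda>w. (sU w, sB w))
          - 1 * (CMI (chan_joint \<zeta> pX pT pQ) cT cY cQ - CMI (chan_joint \<zeta> pX pT pQ) cT cZ cQ))"
    using assms(7) unfolding R_in_def Let_def by blast
  interpret binary_source \<beta> \<epsilon> pV pU UU
    using assms finite supp by unfold_locales auto
  interpret binary_wiretap_channel \<zeta> pX pT pQ TT QQ
    using assms finite supp by unfold_locales auto
  obtain u where u: "0 \<le> u" "u \<le> 1/2" "h2 u = H_A_U"
    using h2_surj_half H_A_U_nonneg H_A_U_le_1 by metis
  obtain q where q: "0 \<le> q" "q \<le> 1/2" "h2 q = H_X_Q"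
    using h2_surj_half H_X_Q_nonneg H_X_Q_le_1 by metis
  have "\<And>w. w \<in> set_pmf src \<Longrightarrow> sA w = Ahat (sV w) (sB w)"
    using not_if_expectation_indicator_le_0[OF distortion] by blast
  hence "CMI src sV sA (\<lambda>w. (sU w, sB w)) = \<beta> * h2 u"
    using CMI_V_A_if_determined(2) u(3) by simp
  moreover have "CMI chan cT cY cQ - CMI chan cT cZ cQ \<le> h2 \<zeta> + h2 q - h2 (star \<zeta> q)"
    using secrecy_gap_le assms(6) q by blast
  ultimately have "pos_part (\<beta> * h2 u - (h2 \<zeta> + h2 q - h2 (star \<zeta> q)))
      \<le> pos_part (CMI src sV sA (\<lambda>w. (sU w, sB w)) - 1 * (CMI chan cT cY cQ - CMI chan cT cZ cQ))"
    by (simp add: pos_part_def)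
  moreover have "CH src sA (\<lambda>w. (sU w, sE w)) \<le> h2 \<epsilon> + h2 u - h2 (star \<epsilon> u)"
    using CH_A_UE_le assms(4) u by blast
  moreover have "\<beta> * (1 - h2 u) \<le> 1 - h2 q"
    using rate MI_Q_Y_le unfolding CMI_U_A_B u(3) q(3) by simp
  ultimately show ?thesis using u q equivocation by (intro exI[of _ u] exI[of _ q]) auto
qed

definition bsc_bit :: "real \<Rightarrow> nat \<Rightarrow> nat pmf" where
  "bsc_bit p v = map_pmf (\<lambda>flip. of_bool ((v = 1) \<noteq> flip)) (bernoulli_pmf p)"

lemma set_bsc_bit: "set_pmf (bsc_bit p v) \<subseteq> {0, 1}"
  by (auto simp: bsc_bit_def)

lemma pmf_bsc_bit:
  assumes "0 \<le> p" "p \<le> 1" "v \<in> {0, 1}" "w \<in> {0, 1}"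
  shows "pmf (bsc_bit p v) w = (if w = v then 1 - p else p)"
  using assms by (auto simp: bsc_bit_def map_pmf_def pmf_bind_bool)

text \<open>Unfolding with this before \<open>simp\<close> keeps the numeral \<open>1\<close>, which \<open>simp\<close> would turn into
  \<open>Suc 0\<close> inside the set and thus out of reach of facts stated for \<open>1\<close>.\<close>
lemma sum_nat_0_1: "(\<Sum>x\<in>{0::nat, 1}. f x) = f 0 + f 1"
  by simp

lemma h2w_bsc_half_pair:
  assumes "0 \<le> x" "x \<le> 1" "0 \<le> e" "e \<le> 1"
  shows "h2w_bsc e (x / 2) ((1 - x) / 2) + h2w_bsc e ((1 - x) / 2) (x / 2) = h2 (star e x)"
proof -
  have half: "x / 2 + (1 - x) / 2 = 1/2" "(1 - x) / 2 + x / 2 = 1/2" "((1 - x) / 2) / (1/2) = 1 - x"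
    by (simp_all add: field_simps)
  have "h2w_bsc e (x / 2) ((1 - x) / 2) = 1/2 * h2 (star e x)"
    using h2w_bsc_eq_h2_star[of "x / 2" "(1 - x) / 2" e] assms unfolding half by simp
  moreover have "h2w_bsc e ((1 - x) / 2) (x / 2) = 1/2 * h2 (star e x)"
    using h2w_bsc_eq_h2_star[of "(1 - x) / 2" "x / 2" e] assms unfolding half
    by (simp add: star_one_minus h2_one_minus)
  ultimately show ?thesis by simp
qed

lemma src_joint_test_channel:
  assumes "0 \<le> \<beta>" "\<beta> \<le> 1" "0 \<le> \<epsilon>" "\<epsilon> \<le> 1" "0 \<le> u" "u \<le> 1"
  defines "S \<equiv> src_joint \<beta> \<epsilon> (\<lambda>a. return_pmf (of_bool a)) (bsc_bit u)"
  shows "CMI S sU sA sB = \<beta> * (1 - h2 u)" "CMI S sV sA sB = \<beta>"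
    and "CMI S sV sA (\<lambda>w. (sU w, sB w)) = \<beta> * h2 u"
    and "CH S sA (\<lambda>w. (sU w, sE w)) = h2 \<epsilon> + h2 u - h2 (star \<epsilon> u)"
    and "measure_pmf.expectation S (\<lambda>w. if sA w \<noteq> (sV w = 1) then 1 else 0 :: real) = 0"
proof -
  interpret binary_source \<beta> \<epsilon> "\<lambda>a. return_pmf (of_bool a)" "bsc_bit u" "{0, 1}"
    using assms set_bsc_bit by unfold_locales auto
  have pAU: "pAU True 0 = u / 2" "pAU True 1 = (1 - u) / 2" "pAU False 0 = (1 - u) / 2"
    "pAU False 1 = u / 2"
    using assms by (simp_all add: pAU_def pmf_bsc_bit bind_return_pmf)
  have "H_A_U = h2 (star 0 u)"
    using h2w_bsc_half_pair[of u 0] assms unfolding H_A_U_def sum_nat_0_1 pAU by (simp add: h2w_bsc_def)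
  hence H_A_U: "H_A_U = h2 u" by (simp add: star_def)
  have determined: "\<And>w. w \<in> set_pmf src \<Longrightarrow> sA w = (\<lambda>v b. v = 1) (sV w) (sB w)"
    by (auto simp: src_joint_def sA_def sV_def of_bool_def split: if_splits)
  show "CMI S sU sA sB = \<beta> * (1 - h2 u)"
    using CMI_U_A_B unfolding S_def H_A_U .
  show "CMI S sV sA sB = \<beta>" "CMI S sV sA (\<lambda>w. (sU w, sB w)) = \<beta> * h2 u"
    using CMI_V_A_if_determined[OF determined] unfolding S_def H_A_U by simp_all
  show "CH S sA (\<lambda>w. (sU w, sE w)) = h2 \<epsilon> + h2 u - h2 (star \<epsilon> u)"
    using h2w_bsc_half_pair[of u \<epsilon>] assms unfolding S_def CH_A_UE H_A_U sum_nat_0_1 pAU by simp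
  have "measure_pmf.expectation S (\<lambda>w. if sA w \<noteq> (sV w = 1) then 1 else 0 :: real)
      = measure_pmf.expectation S (\<lambda>w. 0 :: real)"
    using determined unfolding S_def
    by (intro integral_cong_AE) (auto simp: AE_measure_pmf_iff)
  thus "measure_pmf.expectation S (\<lambda>w. if sA w \<noteq> (sV w = 1) then 1 else 0 :: real) = 0" by simp
qed

lemma chan_joint_test_channel:
  assumes "0 \<le> \<zeta>" "\<zeta> \<le> 1" "0 \<le> q" "q \<le> 1"
  defines "C \<equiv> chan_joint \<zeta> (bernoulli_pmf (1/2)) (\<lambda>x. return_pmf (of_bool x)) (bsc_bit q)"
  shows "MI C cQ cY = 1 - h2 q" "MI C cT cY = 1"
    and "CMI C cT cY cQ - CMI C cT cZ cQ = h2 \<zeta> + h2 q - h2 (star \<zeta> q)"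
proof -
  interpret binary_wiretap_channel \<zeta> "bernoulli_pmf (1/2)" "\<lambda>x. return_pmf (of_bool x)" "bsc_bit q"
    "{0, 1}" "{0, 1}"
    using assms set_bsc_bit by unfold_locales auto
  have pXQ: "pXQ True 0 = q / 2" "pXQ True 1 = (1 - q) / 2" "pXQ False 0 = (1 - q) / 2"
    "pXQ False 1 = q / 2"
    using assms by (simp_all add: pXQ_def pmf_bsc_bit bind_return_pmf)
  have "H_X_Q = h2 (star 0 q)"
    using h2w_bsc_half_pair[of q 0] assms unfolding H_X_Q_def sum_nat_0_1 pXQ by (simp add: h2w_bsc_def)
  hence H_X_Q: "H_X_Q = h2 q" by (simp add: star_def)
  have Hv_Y: "Hv chan cY = 1"
    unfolding Hv_Y by (simp add: h2w_diag)
  have determined: "\<And>w. w \<in> set_pmf chan \<Longrightarrow> cY w = (cT w = 1)"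
    by (auto simp: chan_joint_def cY_def cT_def of_bool_def split: if_splits)
  have "CH chan cY cT = 0"
    by (rule CH_eq_0_if_determined[where f="\<lambda>t. t = 1"]) (use determined in auto)
  moreover have "CH chan cY (\<lambda>w. (cT w, cQ w)) = 0"
    by (rule CH_eq_0_if_determined[where f="\<lambda>(t, q). t = 1"]) (use determined in auto)
  moreover have "CH chan cZ cQ = h2 (star \<zeta> q)"
    using h2w_bsc_half_pair[of q \<zeta>] assms unfolding CH_Z_Q sum_nat_0_1 pXQ by simp
  moreover have "CH chan cZ (\<lambda>w. (cT w, cQ w)) = h2 \<zeta>"
  proof -
    have "h2w_bsc \<zeta> (pXTQ True tq) (pXTQ False tq) = (pXTQ True tq + pXTQ False tq) * h2 \<zeta>" for tq
      using assms by (intro h2w_bsc_if_deterministic pXTQ_nonneg) (auto simp: pXTQ_def split: split_indicator)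
    thus ?thesis unfolding CH_Z_TQ using sum_pXTQ by (simp add: sum_distrib_right[symmetric])
  qed
  ultimately show "MI C cQ cY = 1 - h2 q" "MI C cT cY = 1"
    "CMI C cT cY cQ - CMI C cT cZ cQ = h2 \<zeta> + h2 q - h2 (star \<zeta> q)"
    unfolding C_def MI_eq_Hv_minus_CH CMI_eq_CH_diff Hv_Y CH_Y_Q H_X_Q by simp_all
qed

lemma inner_bound_achievable:
  assumes "0 \<le> \<beta>" "\<beta> \<le> 1" "0 \<le> \<epsilon>" "\<epsilon> \<le> 1/2" "0 \<le> \<zeta>" "\<zeta> \<le> 1/2" "\<Delta> \<ge> 0"
    and "0 \<le> u" "u \<le> 1/2" "0 \<le> q" "q \<le> 1/2"
    and "\<beta> * (1 - h2 u) \<le> 1 - h2 q"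
    and "\<Delta> \<le> h2 \<epsilon> + h2 u - h2 (star \<epsilon> u)
            - pos_part (\<beta> * h2 u - (h2 \<zeta> + h2 q - h2 (star \<zeta> q)))"
  shows "(1, 0, \<Delta>) \<in> R_in \<beta> \<epsilon> \<zeta>"
  by (rule R_in_memI[where UU="{0, 1}" and VV="{0, 1}" and QQ="{0, 1}" and TT="{0, 1}"
      and pU="bsc_bit u" and pV="\<lambda>a. return_pmf (of_bool a)" and pQ="bsc_bit q"
      and pT="\<lambda>x. return_pmf (of_bool x)" and pX="bernoulli_pmf (1/2)" and Ahat="\<lambda>v b. v = 1"])
    (use assms set_bsc_bit src_joint_test_channel[of \<beta> \<epsilon> u] chan_joint_test_channel[of \<zeta> q]
      in simp_all)

theorem proposition3:
  fixes \<beta> \<epsilon> \<zeta> \<Delta> :: real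
  assumes "0 \<le> \<beta>" "\<beta> \<le> 1"
    and "0 \<le> \<epsilon>" "\<epsilon> \<le> 1/2"
    and "0 \<le> \<zeta>" "\<zeta> \<le> 1/2"
    and "\<Delta> \<ge> 0"
  shows "(1, 0, \<Delta>) \<in> R_in \<beta> \<epsilon> \<zeta> \<longleftrightarrow>
    (\<exists>u q. 0 \<le> u \<and> u \<le> 1/2 \<and> 0 \<le> q \<and> q \<le> 1/2 \<and>
       \<beta> * (1 - h2 u) \<le> 1 - h2 q \<and>
       \<Delta> \<le> h2 \<epsilon> + h2 u - h2 (star \<epsilon> u)
            - pos_part (\<beta> * h2 u - (h2 \<zeta> + h2 q - h2 (star \<zeta> q))))"
  using inner_bound_converse[OF assms(1-6)] inner_bound_achievable[OF assms] by blast

end
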